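(* Let $G$ be a finite chordal graph and $v$ a vertex of $G$ that lies in a maximal clique of size at least three. Then $v$ is incident on at least two exposed edges of $G$.
   Context: All graphs are finite, undirected, simple. A graph is chordal if every induced cycle has length three. A facet edge of $G$ is an edge $xy$ such that $\{x,y\}$ is a maximal clique of $G$. An edge of $G$ is exposed if it is contained in a unique maximal clique of $G$ and it is not a facet edge. *)

theory Defs
  imports Main
begin

definition simple_graph :: "'a set \<Rightarrow> ('a \<Rightarrow> 'a \<Rightarrow> bool) \<Rightarrow> bool" where
  "simple_graph V E \<longleftrightarrow> finite V \<and> (\<forall>x y. E x y \<longrightarrow> x \<in> V \<and> y \<in> V)
     \<and> (\<forall>x y. E x y \<longrightarrow> E y x) \<and> (\<forall>x. \<not> E x x)"

definition clique :: "'a set \<Rightarrow> ('a \<Rightarrow> 'a \<Rightarrow> bool) \<Rightarrow> 'a set \<Rightarrow> bool" where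
  "clique V E C \<longleftrightarrow> C \<subseteq> V \<and> (\<forall>x\<in>C. \<forall>y\<in>C. x \<noteq> y \<longrightarrow> E x y)"

definition maximal_clique :: "'a set \<Rightarrow> ('a \<Rightarrow> 'a \<Rightarrow> bool) \<Rightarrow> 'a set \<Rightarrow> bool" where
  "maximal_clique V E C \<longleftrightarrow> clique V E C \<and> (\<forall>D. clique V E D \<and> C \<subseteq> D \<longrightarrow> D = C)"

definition is_cycle :: "'a set \<Rightarrow> ('a \<Rightarrow> 'a \<Rightarrow> bool) \<Rightarrow> 'a list \<Rightarrow> bool" where
  "is_cycle V E cs \<longleftrightarrow> length cs \<ge> 3 \<and> distinct cs \<and> set cs \<subseteq> V \<and>
     (\<forall>i < length cs. E (cs ! i) (cs ! ((i + 1) mod length cs)))"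

definition induced_cycle :: "'a set \<Rightarrow> ('a \<Rightarrow> 'a \<Rightarrow> bool) \<Rightarrow> 'a list \<Rightarrow> bool" where
  "induced_cycle V E cs \<longleftrightarrow> is_cycle V E cs \<and>
     (\<forall>i < length cs. \<forall>j < length cs. E (cs ! i) (cs ! j) \<longrightarrow>
        j = (i + 1) mod length cs \<or> i = (j + 1) mod length cs)"

definition chordal :: "'a set \<Rightarrow> ('a \<Rightarrow> 'a \<Rightarrow> bool) \<Rightarrow> bool" where
  "chordal V E \<longleftrightarrow> (\<forall>cs. induced_cycle V E cs \<longrightarrow> length cs = 3)"

definition facet_edge :: "'a set \<Rightarrow> ('a \<Rightarrow> 'a \<Rightarrow> bool) \<Rightarrow> 'a \<Rightarrow> 'a \<Rightarrow> bool" where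
  "facet_edge V E x y \<longleftrightarrow> E x y \<and> maximal_clique V E {x, y}"

definition exposed_edge :: "'a set \<Rightarrow> ('a \<Rightarrow> 'a \<Rightarrow> bool) \<Rightarrow> 'a \<Rightarrow> 'a \<Rightarrow> bool" where
  "exposed_edge V E x y \<longleftrightarrow> E x y \<and>
     (\<exists>!C. maximal_clique V E C \<and> {x, y} \<subseteq> C) \<and> \<not> facet_edge V E x y"

end

theory Submission
  imports Defs
begin

text \<open>Let \<open>b\<close>, \<open>c\<close> be two further vertices of a maximal clique of size at least three through
  \<open>v\<close>, and let \<open>K\<close> be the component of \<open>b\<close> in the link of \<open>v\<close> (the subgraph induced by the
  neighbours of \<open>v\<close>); it contains the edge \<open>bc\<close>. By Dirac's lemma the chordal graph \<open>K\<close> has two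
  distinct simplicial vertices. For such an \<open>s\<close>, every common neighbour of \<open>v\<close> and \<open>s\<close> is a
  neighbour of \<open>s\<close> in \<open>K\<close>, so these common neighbours form a clique; together with \<open>v\<close> and \<open>s\<close>
  they form the unique maximal clique containing \<open>vs\<close>, and it is bigger than \<open>{v, s}\<close>
  because \<open>s\<close> has a neighbour in \<open>K\<close>. Hence \<open>vs\<close> is exposed.\<close>

lemma simple_graphD:
  assumes "simple_graph V E"
  shows "finite V" and "E x y \<Longrightarrow> x \<in> V" and "E x y \<Longrightarrow> y \<in> V"
    and "E x y \<Longrightarrow> E y x" and "\<not> E x x"
  using assms unfolding simple_graph_def by blast+

definition induced_path :: "('a \<Rightarrow> 'a \<Rightarrow> bool) \<Rightarrow> 'a list \<Rightarrow> bool" where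
  "induced_path E q \<longleftrightarrow> distinct q \<and> successively E q \<and>
     (\<forall>i < length q. \<forall>j < length q. E (q ! i) (q ! j) \<longrightarrow> i = Suc j \<or> j = Suc i)"

text \<open>Closing an induced path with an outside vertex adjacent exactly to its two ends gives an
  induced cycle of length at least four.\<close>
lemma chordal_no_induced_path_cone:
  assumes sg: "simple_graph V E" and ch: "chordal V E"
    and q: "induced_path E q" "set q \<subseteq> V" "length q \<ge> 3"
    and a: "a \<notin> set q" "E a (q ! 0)" "E a (q ! (length q - 1))"
    and amid: "\<And>i. 0 < i \<Longrightarrow> i < length q - 1 \<Longrightarrow> \<not> E a (q ! i)"
  shows False
proof -
  note sym = simple_graphD(4)[OF sg] and irr = simple_graphD(5)[OF sg]
  have dq: "distinct q" and st: "\<And>i. Suc i < length q \<Longrightarrow> E (q ! i) (q ! Suc i)"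
    and ind: "\<And>i j. i < length q \<Longrightarrow> j < length q \<Longrightarrow> E (q ! i) (q ! j) \<Longrightarrow> i = Suc j \<or> j = Suc i"
    using q(1) successively_nth unfolding induced_path_def by blast+
  define n where "n = length q"
  have cyc: "is_cycle V E (a # q)"
    unfolding is_cycle_def
  proof (intro conjI allI impI)
    show "3 \<le> length (a # q)" "distinct (a # q)" "set (a # q) \<subseteq> V"
      using q a dq simple_graphD(2)[OF sg a(2)] by auto
    fix i assume i: "i < length (a # q)"
    show "E ((a # q) ! i) ((a # q) ! ((i + 1) mod length (a # q)))"
    proof (cases i)
      case 0 then show ?thesis using a q(3) by (cases q) auto
    next
      case (Suc k)
      show ?thesis
      proof (cases "Suc k < n")
        case True
        then show ?thesis using st[of k] Suc n_def by simp
      next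
        case False
        then have "Suc k = n" using i Suc n_def by simp
        then show ?thesis using sym[OF a(3)] Suc n_def by (auto simp: nth_Cons')
      qed
    qed
  qed
  have "induced_cycle V E (a # q)"
    unfolding induced_cycle_def
  proof (intro conjI allI impI cyc)
    fix i j assume i: "i < length (a # q)" and j: "j < length (a # q)"
      and e: "E ((a # q) ! i) ((a # q) ! j)"
    have ends: "k = 0 \<or> k = n - 1" if "E a (q ! k)" "k < n" for k
      using amid[of k] that n_def by force
    show "j = (i + 1) mod length (a # q) \<or> i = (j + 1) mod length (a # q)"
    proof (cases i; cases j)
      fix l assume "i = 0" "j = Suc l"
      then show ?thesis using ends[of l] e j n_def q(3) by auto
    next
      fix k assume "i = Suc k" "j = 0"
      then show ?thesis using ends[of k] e i sym n_def q(3) by auto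
    next
      fix k l assume "i = Suc k" "j = Suc l"
      then show ?thesis using ind[of k l] e i j by auto
    qed (use e irr in auto)
  qed
  then show False using ch q(3) unfolding chordal_def by fastforce
qed

lemma rtranclp_imp_walk:
  assumes "r\<^sup>*\<^sup>* u w"
  shows "\<exists>p. p \<noteq> [] \<and> hd p = u \<and> last p = w \<and> successively r p \<and> set p \<subseteq> {z. r\<^sup>*\<^sup>* u z}"
  using assms
proof (induction rule: rtranclp_induct)
  case base
  show ?case by (intro exI[of _ "[u]"]) auto
next
  case (step y z)
  then obtain p where "p \<noteq> []" "hd p = u" "last p = y" "successively r p" "set p \<subseteq> {z. r\<^sup>*\<^sup>* u z}"
    by blast
  with step show ?case
    by (intro exI[of _ "p @ [z]"]) (auto simp: successively_append_iff)
qed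

lemma successively_shortcut:
  assumes "successively E q" "0 < k" "k \<le> j" "j < length q" "E (q ! (k - 1)) (q ! j)"
  shows "successively E (take k q @ drop j q)"
proof -
  have "successively E (take k q)" "successively E (drop j q)"
    using assms(1) successively_append_iff[of E "take k q" "drop k q"]
      successively_append_iff[of E "take j q" "drop j q"] by auto
  moreover have "take k q \<noteq> []" using assms by (cases q) auto
  then have "last (take k q) = q ! (k - 1)" using assms by (simp add: last_conv_nth min_def)
  moreover have "hd (drop j q) = q ! j" using assms by (simp add: hd_drop_conv_nth)
  ultimately show ?thesis using assms by (auto simp: successively_append_iff)
qed

lemma shortest_walk_induced_path:
  assumes sg: "simple_graph V E" and sq: "successively E q" and ne: "q \<noteq> []"
    and shortest: "\<And>q'. q' \<noteq> [] \<Longrightarrow> hd q' = hd q \<Longrightarrow> last q' = last q \<Longrightarrow> successively E q'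
              \<Longrightarrow> set q' \<subseteq> set q \<Longrightarrow> length q \<le> length q'"
  shows "induced_path E q"
proof -
  note sym = simple_graphD(4)[OF sg] and irr = simple_graphD(5)[OF sg]
  have no_chord: False if "0 < k" "k < j" "j < length q" "E (q ! (k - 1)) (q ! j)" for k j
  proof -
    let ?q = "take k q @ drop j q"
    have "successively E ?q" using successively_shortcut[OF sq that(1) _ that(3,4)] that(2) by simp
    moreover have "set ?q \<subseteq> set q" using set_take_subset set_drop_subset by fastforce
    ultimately show False
      using shortest[of ?q] that ne by (auto simp: hd_append min_def)
  qed
  have no_return: False if "0 < j" "j < length q" "q ! 0 = q ! j" for j
  proof -
    have "successively E (drop j q)"
      using sq successively_append_iff[of E "take j q" "drop j q"] by simp
    then show False
      using shortest[of "drop j q"] set_drop_subset[of j q] that ne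
      by (auto simp: hd_drop_conv_nth hd_conv_nth)
  qed
  have "distinct q"
  proof (rule ccontr)
    assume "\<not> distinct q"
    then obtain i j where ij: "i < j" "j < length q" "q ! i = q ! j"
      by (metis distinct_conv_nth linorder_neqE_nat)
    show False
    proof (cases i)
      case 0 then show ?thesis using no_return[of j] ij by simp
    next
      case (Suc i')
      then show ?thesis using successively_nth[OF sq, of i'] no_chord[of i j] ij by simp
    qed
  qed
  moreover have "i = Suc j \<or> j = Suc i" if "i < length q" "j < length q" "E (q ! i) (q ! j)" for i j
    using no_chord[of "Suc i" j] no_chord[of "Suc j" i] that irr sym
    by (cases i j rule: linorder_cases) (auto intro: Suc_lessI)
  ultimately show ?thesis using sq unfolding induced_path_def by blast
qed

definition component :: "('a \<Rightarrow> 'a \<Rightarrow> bool) \<Rightarrow> 'a set \<Rightarrow> 'a \<Rightarrow> 'a set" where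
  "component E W b = {z. (\<lambda>x y. E x y \<and> x \<in> W \<and> y \<in> W)\<^sup>*\<^sup>* b z}"

lemma component_subset: "b \<in> W \<Longrightarrow> component E W b \<subseteq> W"
  unfolding component_def by (auto elim: rtranclp.cases)

lemma component_closed:
  assumes "z \<in> component E W b" "b \<in> W" "y \<in> W" "E z y"
  shows "y \<in> component E W b"
  using assms component_subset[OF assms(2)] unfolding component_def
  by (auto intro: rtranclp.rtrancl_into_rtrancl)

lemma component_walk:
  assumes sym: "\<And>x y. E x y \<Longrightarrow> E y x"
    and "x \<in> component E W b" "y \<in> component E W b"
  shows "\<exists>p. p \<noteq> [] \<and> hd p = x \<and> last p = y \<and> successively E p \<and> set p \<subseteq> component E W b"
proof -
  define r where "r = (\<lambda>x y. E x y \<and> x \<in> W \<and> y \<in> W)"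
  have "symp r" using sym unfolding r_def symp_def by blast
  then have "r\<^sup>*\<^sup>* x b" "r\<^sup>*\<^sup>* b y"
    using assms(2,3) symp_rtranclp unfolding component_def r_def[symmetric] by (blast dest: sympD)+
  then obtain p where p: "p \<noteq> []" "hd p = x" "last p = y" "successively r p"
    "set p \<subseteq> {z. r\<^sup>*\<^sup>* x z}"
    using rtranclp_imp_walk[of r x y] rtranclp_trans by metis
  have "set p \<subseteq> component E W b"
    using p(5) assms(2) unfolding component_def r_def[symmetric] by auto
  moreover have "successively E p" using p(4) by (rule successively_mono) (simp add: r_def)
  ultimately show ?thesis using p by blast
qed

text \<open>A shortest walk from \<open>x\<close> to \<open>y\<close> through the component, closed up by \<open>a\<close>,
  would be an induced cycle of length at least four.\<close>
lemma chordal_attachments_adjacent: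
  assumes sg: "simple_graph V E" and ch: "chordal V E"
    and R: "R \<subseteq> V" "b \<in> R" "\<And>z. z \<in> R \<Longrightarrow> z \<noteq> a \<and> \<not> E a z"
    and x: "E a x" "E x cx" "cx \<in> component E R b"
    and y: "E a y" "E y cy" "cy \<in> component E R b"
    and "x \<noteq> y"
  shows "E x y"
proof (rule ccontr)
  assume nxy: "\<not> E x y"
  note sym = simple_graphD(4)[OF sg] and irr = simple_graphD(5)[OF sg]
  define C where "C = component E R b"
  have CR: "C \<subseteq> R" using component_subset[OF R(2)] C_def by blast
  obtain p where p: "p \<noteq> []" "hd p = cx" "last p = cy" "successively E p" "set p \<subseteq> C"
    using component_walk[OF sym x(3) y(3)] C_def by blast
  define P where "P = (\<lambda>q. q \<noteq> [] \<and> hd q = x \<and> last q = y \<and> successively E q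
     \<and> set q \<subseteq> insert x (insert y C))"
  have "successively E (p @ [y])" using p y(2) sym by (simp add: successively_append_iff)
  then have "P (x # p @ [y])"
    using p x(2) unfolding P_def by (auto simp: successively_Cons hd_append)
  then obtain q where Pq: "P q" and shortest: "\<And>q'. P q' \<Longrightarrow> length q \<le> length q'"
    using ex_has_least_nat[of P _ length] by blast
  have qne: "q \<noteq> []" and hq: "q ! 0 = x" and lq: "q ! (length q - 1) = y"
    and sq: "successively E q" and setq: "set q \<subseteq> insert x (insert y C)"
    using Pq unfolding P_def by (auto simp: hd_conv_nth last_conv_nth)
  have ind: "induced_path E q"
  proof (rule shortest_walk_induced_path[OF sg sq qne])
    fix q' assume "q' \<noteq> []" "hd q' = hd q" "last q' = last q" "successively E q'" "set q' \<subseteq> set q"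
    then show "length q \<le> length q'" using Pq setq shortest unfolding P_def by auto
  qed
  then have dq: "distinct q" unfolding induced_path_def by blast
  have len: "length q \<ge> 3"
  proof (rule ccontr)
    assume "\<not> 3 \<le> length q"
    moreover have "length q \<noteq> 1" using hq lq \<open>x \<noteq> y\<close> by auto
    moreover have "length q \<noteq> 2" using successively_nth[OF sq, of 0] hq lq nxy by auto
    ultimately show False using qne by (cases "length q") (auto simp: numeral_3_eq_3 less_Suc_eq)
  qed
  show False
  proof (rule chordal_no_induced_path_cone[OF sg ch ind _ len])
    show "set q \<subseteq> V" using setq CR R(1) simple_graphD(3)[OF sg] x(1) y(1) by blast
    show "a \<notin> set q" using setq CR R(3) x(1) y(1) irr by blast
    show "E a (q ! 0)" "E a (q ! (length q - 1))" using hq lq x(1) y(1) by simp_all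
    fix i assume i: "0 < i" "i < length q - 1"
    then have il: "i < length q" "0 < length q" "length q - 1 < length q" by auto
    then have "q ! i \<noteq> x" "q ! i \<noteq> y"
      using hq lq i nth_eq_iff_index_eq[OF dq il(1) il(2)] nth_eq_iff_index_eq[OF dq il(1) il(3)]
      by auto
    moreover have "q ! i \<in> set q" using i by simp
    ultimately show "\<not> E a (q ! i)" using setq CR R(3) by blast
  qed
qed

definition simplicial :: "('a \<Rightarrow> 'a \<Rightarrow> bool) \<Rightarrow> 'a set \<Rightarrow> 'a \<Rightarrow> bool" where
  "simplicial E W s \<longleftrightarrow> s \<in> W \<and> (\<forall>y\<in>W. \<forall>z\<in>W. E s y \<longrightarrow> E s z \<longrightarrow> y \<noteq> z \<longrightarrow> E y z)"

text \<open>Dirac's lemma, by induction on \<open>W\<close>: let \<open>C\<close> be the component of \<open>b\<close> outside the closed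
  neighbourhood of \<open>a\<close> and \<open>S\<close> the neighbours of \<open>a\<close> attached to \<open>C\<close>. The clique \<open>S\<close>
  separates \<open>C\<close> from \<open>a\<close>, so a simplicial vertex of the smaller set \<open>C \<union> S\<close> lying in \<open>C\<close>
  is simplicial in \<open>W\<close>, and one exists by induction.\<close>
lemma chordal_simplicial_nonadjacent:
  assumes sg: "simple_graph V E" and ch: "chordal V E"
  shows "W \<subseteq> V \<Longrightarrow> a \<in> W \<Longrightarrow> b \<in> W \<Longrightarrow> b \<noteq> a \<Longrightarrow> \<not> E a b
    \<Longrightarrow> \<exists>s. simplicial E W s \<and> s \<noteq> a \<and> \<not> E a s"
proof (induction "card W" arbitrary: W a b rule: less_induct)
  case less
  note sym = simple_graphD(4)[OF sg] and irr = simple_graphD(5)[OF sg]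
  define R where "R = {z \<in> W. z \<noteq> a \<and> \<not> E a z}"
  define C where "C = component E R b"
  define S where "S = {x \<in> W. E a x \<and> (\<exists>z\<in>C. E x z)}"
  have bR: "b \<in> R" and RW: "R \<subseteq> W" using less.prems unfolding R_def by auto
  have bC: "b \<in> C" unfolding C_def component_def by simp
  have CR: "C \<subseteq> R" using component_subset[OF bR] C_def by blast
  have clos: "y \<in> C \<union> S" if "z \<in> C" "y \<in> W" "E z y" for z y
  proof (cases "E a y")
    case True
    then show ?thesis using that sym unfolding S_def by blast
  next
    case False
    then have "y \<in> R" using that CR sym unfolding R_def by blast
    then show ?thesis using component_closed[of z E R b y] bR that C_def by blast
  qed
  have S_clique: "E x y" if xy: "x \<in> S" "y \<in> S" "x \<noteq> y" for x y
  proof -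
    have RV: "R \<subseteq> V" and Ra: "\<And>z. z \<in> R \<Longrightarrow> z \<noteq> a \<and> \<not> E a z"
      using RW less.prems(1) unfolding R_def by auto
    obtain cx cy where "E a x" "E x cx" "cx \<in> C" "E a y" "E y cy" "cy \<in> C"
      using xy unfolding S_def by blast
    then show ?thesis
      using chordal_attachments_adjacent[OF sg ch RV bR Ra] xy(3) unfolding C_def by blast
  qed
  define W' where "W' = C \<union> S"
  have S_W': "S \<subseteq> W'" unfolding W'_def by blast
  have W'W: "W' \<subseteq> W" using CR RW unfolding W'_def S_def by blast
  have "W' \<subset> W" using W'W CR irr less.prems(2) unfolding W'_def R_def S_def by blast
  then have smaller: "card W' < card W"
    using psubset_card_mono finite_subset[OF less.prems(1) simple_graphD(1)[OF sg]] by blast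
  have lift: "\<exists>s. simplicial E W s \<and> s \<noteq> a \<and> \<not> E a s" if sC: "s \<in> C" and sW': "simplicial E W' s" for s
  proof -
    have "simplicial E W s"
      unfolding simplicial_def
    proof (intro conjI ballI impI)
      show "s \<in> W" using sC CR RW by blast
      fix y z assume "y \<in> W" "z \<in> W" "E s y" "E s z" "y \<noteq> z"
      then show "E y z" using sW' clos[OF sC] unfolding simplicial_def W'_def by blast
    qed
    then show ?thesis using sC CR unfolding R_def by blast
  qed
  show ?case
  proof (cases "\<forall>x\<in>W'. \<forall>y\<in>W'. x \<noteq> y \<longrightarrow> E x y")
    case True
    then have "simplicial E W' b" using bC unfolding simplicial_def W'_def by blast
    then show ?thesis using lift bC by blast
  next
    case False
    txt \<open>Pick the non-adjacent pair with \<open>a' \<in> S\<close> if possible; then the simplicial vertex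
      obtained from the induction hypothesis cannot lie in \<open>S\<close>.\<close>
    obtain a' b' where a'b': "a' \<in> W'" "b' \<in> W'" "b' \<noteq> a'" "\<not> E a' b'"
      and S_or: "a' \<in> S \<or> (\<forall>x\<in>S. \<forall>y\<in>W'. y \<noteq> x \<longrightarrow> E x y)"
    proof (cases "\<exists>x\<in>S. \<exists>y\<in>W'. y \<noteq> x \<and> \<not> E x y")
      case True
      then show ?thesis using that S_W' by blast
    next
      case False
      then show ?thesis using that \<open>\<not> (\<forall>x\<in>W'. \<forall>y\<in>W'. x \<noteq> y \<longrightarrow> E x y)\<close> by blast
    qed
    then obtain s where s: "simplicial E W' s" "s \<noteq> a'" "\<not> E a' s"
      using less.hyps[OF smaller] W'W less.prems(1) by blast
    have "s \<notin> S"
    proof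
      assume "s \<in> S"
      then have "E s a'" using S_or S_clique s(2) not_sym[OF s(2)] a'b'(1) by blast
      then show False using s(3) sym by blast
    qed
    then have "s \<in> C" using s(1) unfolding simplicial_def W'_def by blast
    then show ?thesis using lift s(1) by blast
  qed
qed

lemma chordal_two_simplicial:
  assumes sg: "simple_graph V E" and ch: "chordal V E"
    and "W \<subseteq> V" "b \<in> W" "c \<in> W" "b \<noteq> c"
  shows "\<exists>s1 s2. s1 \<noteq> s2 \<and> simplicial E W s1 \<and> simplicial E W s2"
proof (cases "\<forall>x\<in>W. \<forall>y\<in>W. x \<noteq> y \<longrightarrow> E x y")
  case True
  then show ?thesis using assms(4-6) unfolding simplicial_def by blast
next
  case False
  then obtain p q where pq: "p \<in> W" "q \<in> W" "q \<noteq> p" "\<not> E p q" by blast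
  obtain s1 where s1: "simplicial E W s1" "s1 \<noteq> p" "\<not> E p s1"
    using chordal_simplicial_nonadjacent[OF sg ch assms(3) pq] by blast
  have "s1 \<in> W" "\<not> E s1 p" using s1 simple_graphD(4)[OF sg] unfolding simplicial_def by blast+
  then obtain s2 where "simplicial E W s2" "s2 \<noteq> s1"
    using chordal_simplicial_nonadjacent[OF sg ch assms(3) _ pq(1) s1(2)[symmetric]] by blast
  then show ?thesis using s1(1) by blast
qed

text \<open>Every clique containing \<open>v\<close> and \<open>u\<close> lies in \<open>{v, u}\<close> plus their common neighbourhood;
  when the latter is a clique, that set is the unique maximal clique containing the edge.\<close>
lemma exposed_edgeI:
  assumes sg: "simple_graph V E" and "E v u" "E v z" "E u z"
    and common_clique: "\<And>y w. E v y \<Longrightarrow> E u y \<Longrightarrow> E v w \<Longrightarrow> E u w \<Longrightarrow> y \<noteq> w \<Longrightarrow> E y w"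
  shows "exposed_edge V E v u"
proof -
  note sym = simple_graphD(4)[OF sg] and irr = simple_graphD(5)[OF sg]
  define M where "M = {v, u} \<union> {y. E v y \<and> E u y}"
  have M_clique: "clique V E M"
    unfolding clique_def
  proof (intro conjI ballI impI)
    show "M \<subseteq> V" using assms(2) simple_graphD(2,3)[OF sg] unfolding M_def by blast
    fix x y assume "x \<in> M" "y \<in> M" "x \<noteq> y"
    then show "E x y"
      using assms(2) common_clique[of x y] sym[of v u] sym[of v x] sym[of u x] unfolding M_def by blast
  qed
  have below_M: "D \<subseteq> M" if "clique V E D" "{v, u} \<subseteq> D" for D
  proof
    fix y assume "y \<in> D"
    then show "y \<in> M" using that unfolding clique_def M_def by auto
  qed
  have M_max: "maximal_clique V E M" and vuM: "{v, u} \<subseteq> M"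
    using M_clique below_M unfolding maximal_clique_def M_def by auto
  have "\<exists>!C. maximal_clique V E C \<and> {v, u} \<subseteq> C"
  proof (rule ex1I[of _ M])
    fix C assume "maximal_clique V E C \<and> {v, u} \<subseteq> C"
    then show "C = M" using below_M M_clique unfolding maximal_clique_def by blast
  qed (use M_max vuM in blast)
  moreover have "\<not> maximal_clique V E {v, u}"
  proof
    assume "maximal_clique V E {v, u}"
    then have "M = {v, u}" using M_clique vuM unfolding maximal_clique_def by blast
    moreover have "z \<in> M" "z \<noteq> v" "z \<noteq> u" using assms(3,4) irr unfolding M_def by auto
    ultimately show False by blast
  qed
  ultimately show ?thesis using assms(2) unfolding exposed_edge_def facet_edge_def by blast
qed

lemma component_neighbour:
  assumes sym: "\<And>x y. E x y \<Longrightarrow> E y x"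
    and "x \<in> component E W b" "b \<in> W" "c \<in> W" "E b c"
  shows "\<exists>y\<in>component E W b. E x y"
proof (cases "x = b")
  case True
  then show ?thesis using assms component_closed[of b E W b c] unfolding component_def by auto
next
  case False
  then obtain w where "(\<lambda>x y. E x y \<and> x \<in> W \<and> y \<in> W)\<^sup>*\<^sup>* b w" "E w x" "w \<in> W"
    using assms(2) unfolding component_def by (auto elim: rtranclp.cases)
  then show ?thesis using sym unfolding component_def by blast
qed

text \<open>The common neighbours of \<open>v\<close> and a vertex \<open>s\<close> of the link of \<open>v\<close> are neighbours of \<open>s\<close>
  in the link, hence lie in the component of \<open>s\<close> there.\<close>
lemma simplicial_in_link_exposed:
  assumes sg: "simple_graph V E" and "E v b" "E v c" "E b c"
    and "simplicial E (component E {z. E v z} b) s"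
  shows "exposed_edge V E v s"
proof -
  define K where "K = component E {z. E v z} b"
  have bN: "b \<in> {z. E v z}" using assms(2) by simp
  have sK: "s \<in> K" using assms(5) unfolding simplicial_def K_def by blast
  have KN: "K \<subseteq> {z. E v z}" using component_subset[OF bN] K_def by blast
  have common: "y \<in> K" if "E v y" "E s y" for y
    using component_closed[of s E "{z. E v z}" b y] sK bN that K_def by blast
  have cN: "c \<in> {z. E v z}" using assms(3) by simp
  obtain z where z: "z \<in> K" "E s z"
    using component_neighbour[OF simple_graphD(4)[OF sg] sK[unfolded K_def] bN cN assms(4)] K_def
    by blast
  show ?thesis
  proof (rule exposed_edgeI[OF sg])
    show "E v s" "E v z" using sK z(1) KN by blast+
    show "E s z" by (rule z(2))
    fix y w assume "E v y" "E s y" "E v w" "E s w" "y \<noteq> w"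
    then show "E y w" using assms(5) common unfolding simplicial_def K_def by blast
  qed
qed

theorem lemma2p11:
  fixes V :: "'a set" and E :: "'a \<Rightarrow> 'a \<Rightarrow> bool" and v :: 'a
  assumes "simple_graph V E"
    and "chordal V E"
    and "v \<in> V"
    and "\<exists>C. maximal_clique V E C \<and> v \<in> C \<and> card C \<ge> 3"
  shows "\<exists>u w. u \<noteq> w \<and> exposed_edge V E v u \<and> exposed_edge V E v w"
proof -
  obtain C where C: "clique V E C" "v \<in> C" "card C \<ge> 3"
    using assms(4) unfolding maximal_clique_def by blast
  have "finite (C - {v})" "\<not> card (C - {v}) \<le> Suc 0"
    using C(2,3) card_Diff_singleton[OF C(2)] card.infinite by fastforce+
  then obtain b c where bc: "b \<in> C" "c \<in> C" "b \<noteq> v" "c \<noteq> v" "b \<noteq> c"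
    using card_le_Suc0_iff_eq by blast
  then have edges: "E v b" "E v c" "E b c" using C(1,2) unfolding clique_def by auto
  define K where "K = component E {z. E v z} b"
  have "K \<subseteq> V"
    using component_subset[of b "{z. E v z}" E] edges simple_graphD(3)[OF assms(1)] K_def by blast
  moreover have "b \<in> K" "c \<in> K"
    using edges component_closed[of b E "{z. E v z}" b c] unfolding K_def component_def by auto
  ultimately obtain s1 s2 where "s1 \<noteq> s2" "simplicial E K s1" "simplicial E K s2"
    using chordal_two_simplicial[OF assms(1,2)] bc(5) by blast
  then show ?thesis using simplicial_in_link_exposed[OF assms(1) edges] K_def by blast
qed

end
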